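(* Let $\mathcal{H}$ be a complex Hilbert space, $A\in\mathcal{B}(\mathcal{H})$ positive and $S\in\mathcal{B}_A(\mathcal{H})$. Then $$d\omega_A^2(S)\le\frac14\left\|S^{\sharp_A}S+SS^{\sharp_A}+4\left(S^{\sharp_A}S\right)^2\right\|_A+\frac12\,\omega_A\left(S^2\right).$$
   Context: $\mathcal{B}(\mathcal{H})$ denotes the bounded linear operators on $\mathcal{H}$. For positive $A$, $\langle x,z\rangle_A=\langle Ax,z\rangle$ and $\|z\|_A=\|A^{1/2}z\|$. $\mathcal{B}_A(\mathcal{H})$ is the set of $S\in\mathcal{B}(\mathcal{H})$ for which some $R\in\mathcal{B}(\mathcal{H})$ satisfies $AR=S^*A$; for such $S$, $S^{\sharp_A}=A^{\dagger}S^*A$ with $A^\dagger$ the Moore–Penrose inverse of $A$. For operators $T$ bounded with respect to $\|\cdot\|_A$: $\|T\|_A=\sup_{\|z\|_A=1}\|Tz\|_A$, $\omega_A(T)=\sup_{\|z\|_A=1}|\langle Tz,z\rangle_A|$, and $d\omega_A(T)=\sup_{\|z\|_A=1}(|\langle Tz,z\rangle_A|^2+\|Tz\|_A^4)^{1/2}$. *)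

theory Defs
  imports "HOL-Analysis.Analysis"
begin

class complex_hilbert = banach +
  fixes scaleC :: "complex \<Rightarrow> 'a \<Rightarrow> 'a"
    and cinner :: "'a \<Rightarrow> 'a \<Rightarrow> complex"
  assumes scaleC_add_right: "scaleC c (x + y) = scaleC c x + scaleC c y"
    and scaleC_add_left: "scaleC (c + d) x = scaleC c x + scaleC d x"
    and scaleC_scaleC: "scaleC c (scaleC d x) = scaleC (c * d) x"
    and scaleC_one: "scaleC 1 x = x"
    and scaleC_of_real: "scaleC (complex_of_real r) x = scaleR r x"
    and cinner_add_left: "cinner (x + y) z = cinner x z + cinner y z"
    and cinner_scaleC_left: "cinner (scaleC c x) y = c * cinner x y"
    and cinner_commute: "cinner y x = cnj (cinner x y)"
    and cinner_self_real: "Im (cinner x x) = 0"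
    and cinner_self_nonneg: "0 \<le> Re (cinner x x)"
    and cinner_self_eq_0: "cinner x x = 0 \<longleftrightarrow> x = 0"
    and norm_eq_sqrt_cinner: "norm x = sqrt (Re (cinner x x))"

definition bounded_op :: "('a::complex_hilbert \<Rightarrow> 'a) \<Rightarrow> bool" where
  "bounded_op T \<longleftrightarrow> (\<forall>x y. T (x + y) = T x + T y) \<and> (\<forall>c x. T (scaleC c x) = scaleC c (T x))
     \<and> (\<exists>K. \<forall>x. norm (T x) \<le> K * norm x)"

definition adj :: "('a::complex_hilbert \<Rightarrow> 'a) \<Rightarrow> ('a \<Rightarrow> 'a)" where
  "adj S = (THE T. \<forall>x y. cinner (S x) y = cinner x (T y))"

definition positive_op :: "('a::complex_hilbert \<Rightarrow> 'a) \<Rightarrow> bool" where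
  "positive_op A \<longleftrightarrow> bounded_op A \<and> (\<forall>x. Im (cinner (A x) x) = 0 \<and> 0 \<le> Re (cinner (A x) x))"

text \<open>Moore--Penrose inverse of A (a possibly unbounded operator defined on
R(A) + R(A)^\<bottom>): for y in that domain, it is the unique x \<in> N(A)^\<bottom> with
A x = P_{closure R(A)} y, i.e. A x - y \<bottom> R(A). Outside the domain the value is unspecified.\<close>
definition mp_inverse :: "('a::complex_hilbert \<Rightarrow> 'a) \<Rightarrow> 'a \<Rightarrow> 'a" where
  "mp_inverse A y = (THE x. (\<forall>n. A n = 0 \<longrightarrow> cinner x n = 0) \<and> (\<forall>z. cinner (A x - y) (A z) = 0))"

definition BA :: "('a::complex_hilbert \<Rightarrow> 'a) \<Rightarrow> ('a \<Rightarrow> 'a) set" where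
  "BA A = {S. bounded_op S \<and> (\<exists>R. bounded_op R \<and> (\<forall>x. A (R x) = adj S (A x)))}"

definition sharpA :: "('a::complex_hilbert \<Rightarrow> 'a) \<Rightarrow> ('a \<Rightarrow> 'a) \<Rightarrow> ('a \<Rightarrow> 'a)" where
  "sharpA A S = (\<lambda>x. mp_inverse A (adj S (A x)))"

definition innerA :: "('a::complex_hilbert \<Rightarrow> 'a) \<Rightarrow> 'a \<Rightarrow> 'a \<Rightarrow> complex" where
  "innerA A x z = cinner (A x) z"

definition normA :: "('a::complex_hilbert \<Rightarrow> 'a) \<Rightarrow> 'a \<Rightarrow> real" where
  "normA A z = sqrt (Re (cinner (A z) z))"

text \<open>Suprema over {z. \<parallel>z\<parallel>_A = 1}. All quantities are nonnegative; 0 is inserted so that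
the (degenerate) empty supremum, occurring only for A = 0, is 0.\<close>
definition opnormA :: "('a::complex_hilbert \<Rightarrow> 'a) \<Rightarrow> ('a \<Rightarrow> 'a) \<Rightarrow> real" where
  "opnormA A T = Sup (insert 0 {normA A (T z) | z. normA A z = 1})"

definition numradA :: "('a::complex_hilbert \<Rightarrow> 'a) \<Rightarrow> ('a \<Rightarrow> 'a) \<Rightarrow> real" where
  "numradA A T = Sup (insert 0 {cmod (innerA A (T z) z) | z. normA A z = 1})"

definition dnumradA :: "('a::complex_hilbert \<Rightarrow> 'a) \<Rightarrow> ('a \<Rightarrow> 'a) \<Rightarrow> real" where
  "dnumradA A T = Sup (insert 0 {sqrt ((cmod (innerA A (T z) z))\<^sup>2 + (normA A (T z)) ^ 4) | z. normA A z = 1})"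

end

theory Submission
  imports Defs
begin

text \<open>Write p for the semi-inner product <x,y>_A and J for S^#, so that p(S u, v) = p(u, J v).
  For an A-unit vector z, Buzano's inequality applied to p(Sz,z) p(z,Jz) = |p(Sz,z)|^2 gives
  |p(Sz,z)|^2 <= 1/4 (||Sz||^2 + ||Jz||^2) + 1/2 |p(S^2 z,z)|, while
  ||Sz||^4 = p(z,JSz)^2 <= ||JSz||^2. The three squared seminorms add up to
  Re p((JS + SJ + 4(JS)^2) z, z), which is at most the A-norm of (JS + SJ + 4(JS)^2) z;
  taking suprema over z gives the inequality.

  The rest is making the right-hand side meaningful: adjoints exist by the Riesz representation
  theorem, A A^dagger A = A by orthogonal projection onto ker A, and every S in B_A(H) is bounded
  for the A-seminorm because R S is A-selfadjoint, which lets its A-seminorm be estimated through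
  the norms of its powers.\<close>

lemma scaleC_zero_right [simp]: "scaleC c (0::'a::complex_hilbert) = 0"
  using scaleC_add_right[of c 0 0] by simp

lemma Re_cnj_of_real_mult: "Re (cnj (complex_of_real t * c) * c) = t * (cmod c)\<^sup>2"
proof -
  have "Re (cnj (complex_of_real t * c) * c) = t * ((Re c)\<^sup>2 + (Im c)\<^sup>2)"
    by (simp add: power2_eq_square algebra_simps)
  then show ?thesis by (simp only: cmod_power2)
qed

section \<open>Semi-inner products\<close>

locale semi_inner =
  fixes p :: "'a::complex_hilbert \<Rightarrow> 'a \<Rightarrow> complex"
  assumes add_left: "p (x + y) z = p x z + p y z"
    and scaleC_left: "p (scaleC c x) y = c * p x y"
    and commute: "p y x = cnj (p x y)"
    and self_nonneg: "0 \<le> Re (p x x)"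
begin

definition snorm :: "'a \<Rightarrow> real" where
  "snorm x = sqrt (Re (p x x))"

lemma zero_left [simp]: "p 0 y = 0"
  using add_left[of 0 0 y] by simp

lemma zero_right [simp]: "p x 0 = 0"
  using commute[of 0 x] by simp

lemma minus_left: "p (- x) y = - p x y"
  using add_left[of x "- x" y] by (simp add: add_eq_0_iff2)

lemma diff_left: "p (x - z) y = p x y - p z y"
  using add_left[of x "- z" y] by (simp add: minus_left)

lemma add_right: "p x (y + z) = p x y + p x z"
  by (metis add_left commute complex_cnj_add)

lemma scaleC_right: "p x (scaleC c y) = cnj c * p x y"
  by (metis scaleC_left commute complex_cnj_mult)

lemma diff_right: "p x (y - z) = p x y - p x z"
  by (metis diff_left commute complex_cnj_diff)

lemma self_real: "p x x = complex_of_real (Re (p x x))"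
  using commute[of x x] by (simp add: complex_eq_iff)

lemma snorm_nonneg: "0 \<le> snorm x"
  using self_nonneg[of x] by (simp add: snorm_def)

lemma snorm_power2: "(snorm x)\<^sup>2 = Re (p x x)"
  using self_nonneg[of x] by (simp add: snorm_def)

lemma Re_diff_scaleC_self:
  "Re (p (x - scaleC s y) (x - scaleC s y))
     = Re (p x x) - 2 * Re (cnj s * p x y) + (cmod s)\<^sup>2 * Re (p y y)"
proof -
  have "p (x - scaleC s y) (x - scaleC s y) = p x x - cnj s * p x y - s * cnj (p x y) + s * cnj s * p y y"
    by (simp add: diff_left diff_right scaleC_left scaleC_right commute[of x y] algebra_simps)
  moreover have "s * cnj s * p y y = complex_of_real ((cmod s)\<^sup>2 * Re (p y y))"
    by (subst self_real) (simp add: complex_norm_square[symmetric])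
  ultimately show ?thesis by simp
qed

lemma Cauchy_Schwarz: "cmod (p x y) \<le> snorm x * snorm y"
proof -
  define a b c where "a = Re (p x x)" and "b = Re (p y y)" and "c = p x y"
  have "0 \<le> b" by (simp add: b_def self_nonneg)
  have quadratic: "0 \<le> a - 2 * t * (cmod c)\<^sup>2 + t\<^sup>2 * (cmod c)\<^sup>2 * b" for t :: real
  proof -
    have "0 \<le> Re (p (x - scaleC (complex_of_real t * c) y) (x - scaleC (complex_of_real t * c) y))"
      by (rule self_nonneg)
    also have "\<dots> = a - 2 * (t * (cmod c)\<^sup>2) + (cmod (complex_of_real t * c))\<^sup>2 * b"
      unfolding Re_diff_scaleC_self a_def b_def c_def Re_cnj_of_real_mult ..
    finally show ?thesis by (simp add: norm_mult power_mult_distrib)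
  qed
  have "(cmod c)\<^sup>2 \<le> a * b"
  proof (cases "b = 0")
    case True
    show ?thesis
    proof (rule ccontr)
      assume "\<not> ?thesis"
      then have "0 < (cmod c)\<^sup>2" using True by simp
      moreover have "0 \<le> a - 2 * ((a + 1) / (2 * (cmod c)\<^sup>2)) * (cmod c)\<^sup>2"
        using quadratic[of "(a + 1) / (2 * (cmod c)\<^sup>2)"] True by simp
      ultimately show False by simp
    qed
  next
    case False
    with \<open>0 \<le> b\<close> have "0 < b" by simp
    have "0 \<le> a - 2 * (1 / b) * (cmod c)\<^sup>2 + (1 / b)\<^sup>2 * (cmod c)\<^sup>2 * b" by (rule quadratic)
    also have "\<dots> = a - (cmod c)\<^sup>2 / b" using \<open>0 < b\<close> by (simp add: field_simps power2_eq_square)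
    finally show ?thesis using \<open>0 < b\<close> by (simp add: field_simps)
  qed
  then have "sqrt ((cmod c)\<^sup>2) \<le> sqrt (a * b)" by (rule real_sqrt_le_mono)
  then show ?thesis by (simp add: snorm_def a_def b_def c_def real_sqrt_mult)
qed

lemma Re_le_snorm_mult: "Re (p x y) \<le> snorm x * snorm y"
  using Cauchy_Schwarz[of x y] complex_Re_le_cmod[of "p x y"] by linarith

lemma snorm_scaleC: "snorm (scaleC c x) = cmod c * snorm x"
proof -
  have "p (scaleC c x) (scaleC c x) = complex_of_real ((cmod c)\<^sup>2) * p x x"
    using complex_norm_square[of c] by (simp add: scaleC_left scaleC_right mult.assoc)
  then show ?thesis by (simp add: snorm_def real_sqrt_mult)
qed

lemma snorm_triangle: "snorm (x + y) \<le> snorm x + snorm y"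
proof (rule power2_le_imp_le)
  have "(snorm (x + y))\<^sup>2 = Re (p x x) + 2 * Re (p x y) + Re (p y y)"
    by (simp add: snorm_power2 add_left add_right commute[of x y])
  also have "\<dots> \<le> (snorm x)\<^sup>2 + 2 * (snorm x * snorm y) + (snorm y)\<^sup>2"
    using Re_le_snorm_mult[of x y] by (simp add: snorm_power2)
  also have "\<dots> = (snorm x + snorm y)\<^sup>2" by (simp add: power2_sum)
  finally show "(snorm (x + y))\<^sup>2 \<le> (snorm x + snorm y)\<^sup>2" .
  show "0 \<le> snorm x + snorm y" by (simp add: snorm_nonneg add_nonneg_nonneg)
qed

text \<open>Reflecting y in the line through the unit vector e, u = y - 2 p(y,e) e, does not change
  its seminorm, and p(x,e) p(e,y) = (p(x,y) - p(x,u)) / 2.\<close>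
lemma Buzano:
  assumes e: "snorm e = 1"
  shows "cmod (p x e * p e y) \<le> 1/2 * (snorm x * snorm y + cmod (p x y))"
proof -
  define u where "u = y - scaleC (2 * p y e) e"
  have "p x u = p x y - 2 * p e y * p x e"
    by (simp add: u_def diff_right scaleC_right commute[of e y])
  then have split: "p x e * p e y = (p x y - p x u) / 2" by (simp add: field_simps)
  have "Re (p e e) = 1" using snorm_power2[of e] e by simp
  then have "Re (p u u) = Re (p y y)"
    by (simp add: u_def Re_diff_scaleC_self Re_cnj_of_real_mult[of 2, simplified]
        norm_mult power_mult_distrib)
  then have "snorm u = snorm y" by (simp add: snorm_def)
  have "cmod (p x e * p e y) \<le> (cmod (p x y) + cmod (p x u)) / 2"
    by (simp add: split norm_divide norm_triangle_ineq4)
  also have "\<dots> \<le> (cmod (p x y) + snorm x * snorm y) / 2"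
    using Cauchy_Schwarz[of x u] \<open>snorm u = snorm y\<close> by simp
  finally show ?thesis by simp
qed

lemma Re_adjoint_combination:
  assumes adj: "\<And>u v. p (S u) v = p u (J v)"
  shows "Re (p (J (S z) + S (J z) + scaleC 4 (J (S (J (S z))))) z)
    = (snorm (S z))\<^sup>2 + (snorm (J z))\<^sup>2 + 4 * (snorm (J (S z)))\<^sup>2"
proof -
  have JS: "p (J (S x)) z = cnj (p (S z) (S x))" for x
    using commute[of z "J (S x)"] adj[of z "S x"] by simp
  have "p (J (S (J (S z)))) z = cnj (p (S z) (S (J (S z))))" by (rule JS)
  also have "\<dots> = p (S (J (S z))) (S z)" using commute[of "S z" "S (J (S z))"] by simp
  also have "\<dots> = p (J (S z)) (J (S z))" by (rule adj)
  finally have "p (J (S (J (S z)))) z = p (J (S z)) (J (S z))" .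
  moreover have "p (S (J z)) z = p (J z) (J z)" by (simp add: adj)
  ultimately show ?thesis
    by (simp add: add_left scaleC_left JS snorm_power2)
qed

lemma dnumrad_pointwise_le:
  assumes adj: "\<And>u v. p (S u) v = p u (J v)" and z: "snorm z = 1"
  shows "(cmod (p (S z) z))\<^sup>2 + (snorm (S z))^4
    \<le> 1/4 * snorm (J (S z) + S (J z) + scaleC 4 (J (S (J (S z))))) + 1/2 * cmod (p (S (S z)) z)"
proof -
  have "(cmod (p (S z) z))\<^sup>2 = cmod (p (S z) z * p z (J z))"
    by (simp add: norm_mult power2_eq_square flip: adj)
  also have "\<dots> \<le> 1/2 * (snorm (S z) * snorm (J z)) + 1/2 * cmod (p (S (S z)) z)"
    using Buzano[OF z, of "S z" "J z"] by (simp add: adj distrib_left)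
  finally have Buzano_bound: "(cmod (p (S z) z))\<^sup>2
      \<le> 1/4 * (snorm (S z))\<^sup>2 + 1/4 * (snorm (J z))\<^sup>2 + 1/2 * cmod (p (S (S z)) z)"
    using sum_squares_bound[of "snorm (S z)" "snorm (J z)"] by (simp add: mult.assoc)
  have "(snorm (S z))\<^sup>2 \<le> snorm (J (S z))"
    using Re_le_snorm_mult[of z "J (S z)"] by (simp add: snorm_power2 z flip: adj)
  then have "((snorm (S z))\<^sup>2)\<^sup>2 \<le> (snorm (J (S z)))\<^sup>2"
    by (rule power_mono) simp
  then have "(snorm (S z))^4 \<le> (snorm (J (S z)))\<^sup>2"
    by (simp flip: power_mult)
  moreover have "Re (p (J (S z) + S (J z) + scaleC 4 (J (S (J (S z))))) z)
      \<le> snorm (J (S z) + S (J z) + scaleC 4 (J (S (J (S z)))))"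
    using Re_le_snorm_mult[of "J (S z) + S (J z) + scaleC 4 (J (S (J (S z))))" z] z by simp
  ultimately show ?thesis
    using Buzano_bound Re_adjoint_combination[OF adj, of z] by linarith
qed

end

interpretation cinner: semi_inner "cinner :: 'a::complex_hilbert \<Rightarrow> 'a \<Rightarrow> complex"
  by unfold_locales (fact cinner_add_left cinner_scaleC_left cinner_commute cinner_self_nonneg)+

lemma cinner_snorm_eq_norm: "cinner.snorm x = norm x"
  by (simp add: cinner.snorm_def norm_eq_sqrt_cinner)

lemma power2_norm_eq_cinner: "(norm x)\<^sup>2 = Re (cinner x x)"
  by (simp add: cinner.snorm_power2 flip: cinner_snorm_eq_norm)

section \<open>Orthogonal projections, the Riesz representation and adjoints\<close>

lemma bounded_op_add: "bounded_op T \<Longrightarrow> T (x + y) = T x + T y"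
  unfolding bounded_op_def by blast

lemma bounded_op_scaleC: "bounded_op T \<Longrightarrow> T (scaleC c x) = scaleC c (T x)"
  unfolding bounded_op_def by blast

lemma bounded_op_diff: "bounded_op T \<Longrightarrow> T (x - y) = T x - T y"
  using bounded_op_add[of T "x - y" y] by (simp add: eq_diff_eq)

lemma bounded_op_pos_bound: "bounded_op T \<Longrightarrow> \<exists>M>0. \<forall>x. norm (T x) \<le> M * norm x"
proof -
  assume "bounded_op T"
  then obtain K where K: "\<forall>x. norm (T x) \<le> K * norm x" unfolding bounded_op_def by blast
  have "norm (T x) \<le> max K 1 * norm x" for x
    using K[rule_format, of x] mult_right_mono[of K "max K 1" "norm x"] by simp
  then show ?thesis by (intro exI[of _ "max K 1"]) auto
qed

lemma closed_kernel_additive_bounded: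
  fixes f :: "'a::real_normed_vector \<Rightarrow> 'b::real_normed_vector"
  assumes add: "\<And>x y. f (x + y) = f x + f y" and bound: "\<And>x. norm (f x) \<le> K * norm x"
  shows "closed {x. f x = 0}"
proof -
  have "f x - f y = f (x - y)" for x y
    using add[of "x - y" y] by simp
  then have "dist (f x) (f y) \<le> max K 0 * dist x y" for x y
    using bound[of "x - y"] mult_right_mono[of K "max K 0" "norm (x - y)"]
    by (simp add: dist_norm)
  then have "continuous_on UNIV f"
    by (intro lipschitz_on_continuous_on[of "max K 0"] lipschitz_onI) auto
  then show ?thesis
    using closed_Collect_eq[of f "\<lambda>_. 0"] by simp
qed

lemma parallelogram_law:
  fixes u v :: "'a::complex_hilbert"
  shows "(norm (u - v))\<^sup>2 + (norm (u + v))\<^sup>2 = 2 * (norm u)\<^sup>2 + 2 * (norm v)\<^sup>2"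
  by (simp add: power2_norm_eq_cinner cinner.diff_left cinner.diff_right cinner_add_left
      cinner.add_right algebra_simps)

definition csubspace :: "'a::complex_hilbert set \<Rightarrow> bool" where
  "csubspace M \<longleftrightarrow> 0 \<in> M \<and> (\<forall>a\<in>M. \<forall>b\<in>M. a + b \<in> M) \<and> (\<forall>c. \<forall>a\<in>M. scaleC c a \<in> M)"

lemma csubspace_kernel:
  fixes f :: "'a::complex_hilbert \<Rightarrow> 'b::group_add"
  assumes "\<And>x y. f (x + y) = f x + f y" and "\<And>c x. f x = 0 \<Longrightarrow> f (scaleC c x) = 0"
  shows "csubspace {x. f x = 0}"
proof -
  have "f 0 + f 0 = f 0 + 0" using assms(1)[of 0 0] by simp
  then have "f 0 = 0" by (rule add_left_imp_eq)
  moreover have "f (a + b) = 0" if "f a = 0" "f b = 0" for a b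
    using assms(1)[of a b] that by simp
  ultimately show ?thesis using assms(2) unfolding csubspace_def by blast
qed

lemma Cauchy_if_dist_le_add:
  fixes X :: "nat \<Rightarrow> 'a::metric_space"
  assumes dist: "\<And>j k. dist (X j) (X k) \<le> e j + e k" and e: "e \<longlonglongrightarrow> 0"
  shows "Cauchy X"
proof (rule metric_CauchyI)
  fix r :: real
  assume "0 < r"
  then obtain N where N: "\<forall>n\<ge>N. norm (e n) < r / 2"
    using LIMSEQ_D[OF e, of "r / 2"] by auto
  have "dist (X j) (X k) < r" if "N \<le> j" "N \<le> k" for j k
  proof -
    have "\<bar>e j\<bar> < r / 2" "\<bar>e k\<bar> < r / 2" using N that by auto
    then show ?thesis using dist[of j k] by linarith
  qed
  then show "\<exists>N. \<forall>j\<ge>N. \<forall>k\<ge>N. dist (X j) (X k) < r" by blast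
qed

lemma minimizing_sequence_Cauchy:
  fixes x :: "'a::complex_hilbert"
  assumes M: "csubspace M" and ms: "\<And>k. ms k \<in> M"
    and d: "\<And>w. w \<in> M \<Longrightarrow> d \<le> norm (x - w)" "0 \<le> d"
    and close: "\<And>k. (norm (x - ms k))\<^sup>2 \<le> d\<^sup>2 + e k" and e: "e \<longlonglongrightarrow> 0"
  shows "Cauchy ms"
proof (rule Cauchy_if_dist_le_add)
  have e_nonneg: "0 \<le> e k" for k
    using power_mono[OF d(1)[OF ms[of k]] d(2), of 2] close[of k] by linarith
  have midpoint: "4 * d\<^sup>2 \<le> (norm ((x - ms j) + (x - ms k)))\<^sup>2" for j k
  proof -
    have "scaleR (1/2) (ms j + ms k) \<in> M"
      using M ms scaleC_of_real[of "1/2" "ms j + ms k"] unfolding csubspace_def by metis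
    then have "2 * d \<le> 2 * norm (x - scaleR (1/2) (ms j + ms k))"
      using d(1) by simp
    also have "\<dots> = norm (scaleR 2 (x - scaleR (1/2) (ms j + ms k)))"
      by simp
    also have "scaleR 2 (x - scaleR (1/2) (ms j + ms k)) = (x - ms j) + (x - ms k)"
      by (simp add: algebra_simps scaleR_2)
    finally show ?thesis
      using power_mono[of "2 * d" _ 2] d(2) by (simp add: power_mult_distrib)
  qed
  show "dist (ms j) (ms k) \<le> sqrt (2 * e j) + sqrt (2 * e k)" for j k
  proof -
    have "(dist (ms j) (ms k))\<^sup>2 \<le> 2 * e j + 2 * e k"
      using parallelogram_law[of "x - ms j" "x - ms k"] midpoint[of j k] close[of j] close[of k]
      by (simp add: dist_norm norm_minus_commute)
    then have "dist (ms j) (ms k) \<le> sqrt (2 * e j + 2 * e k)"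
      by (simp add: real_le_rsqrt)
    also have "\<dots> \<le> sqrt (2 * e j) + sqrt (2 * e k)"
      using e_nonneg by (intro sqrt_add_le_add_sqrt) auto
    finally show ?thesis .
  qed
  have "(\<lambda>k. 2 * e k) \<longlonglongrightarrow> 2 * 0" by (intro tendsto_intros e)
  then show "(\<lambda>k. sqrt (2 * e k)) \<longlonglongrightarrow> 0"
    using tendsto_real_sqrt by fastforce
qed

lemma nearest_point_exists:
  fixes x :: "'a::complex_hilbert"
  assumes "closed M" and "csubspace M"
  shows "\<exists>m\<in>M. \<forall>w\<in>M. norm (x - m) \<le> norm (x - w)"
proof -
  define d where "d = Inf ((\<lambda>w. norm (x - w)) ` M)"
  have "0 \<in> M" using assms(2) by (simp add: csubspace_def)
  have bdd: "bdd_below ((\<lambda>w. norm (x - w)) ` M)" by (rule bdd_belowI[of _ 0]) auto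
  have d_le: "d \<le> norm (x - w)" if "w \<in> M" for w
    unfolding d_def using bdd that by (intro cInf_lower) auto
  have "0 \<le> d"
    unfolding d_def using \<open>0 \<in> M\<close> by (intro cInf_greatest) auto
  have "\<exists>m\<in>M. norm (x - m) < d + 1 / Suc k" for k
    using cInf_lessD[of "(\<lambda>w. norm (x - w)) ` M" "d + 1 / Suc k"] \<open>0 \<in> M\<close>
    by (auto simp: d_def)
  then obtain ms where ms: "\<And>k. ms k \<in> M" "\<And>k. norm (x - ms k) < d + 1 / Suc k"
    by metis
  have lim: "(\<lambda>k. d + 1 / real (Suc k)) \<longlonglongrightarrow> d"
    using tendsto_add[OF tendsto_const LIMSEQ_inverse_real_of_nat, of d]
    by (simp add: inverse_eq_divide)
  have "(\<lambda>k. (d + 1 / real (Suc k))\<^sup>2 - d\<^sup>2) \<longlonglongrightarrow> d\<^sup>2 - d\<^sup>2"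
    by (intro tendsto_intros lim)
  then have e: "(\<lambda>k. (d + 1 / real (Suc k))\<^sup>2 - d\<^sup>2) \<longlonglongrightarrow> 0" by simp
  have close: "(norm (x - ms k))\<^sup>2 \<le> d\<^sup>2 + ((d + 1 / real (Suc k))\<^sup>2 - d\<^sup>2)" for k
    using power_mono[OF less_imp_le[OF ms(2)[of k]] norm_ge_zero, of 2] by simp
  have "Cauchy ms"
    using assms(2) ms(1) d_le \<open>0 \<le> d\<close> close e by (rule minimizing_sequence_Cauchy)
  then obtain m where "ms \<longlonglongrightarrow> m"
    by (auto simp: Cauchy_convergent_iff convergent_def)
  then have "m \<in> M" using closed_sequentially[OF assms(1)] ms(1) by blast
  have "(\<lambda>k. norm (x - ms k)) \<longlonglongrightarrow> norm (x - m)"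
    by (intro tendsto_intros \<open>ms \<longlonglongrightarrow> m\<close>)
  then have "norm (x - m) \<le> d"
    using lim less_imp_le[OF ms(2)] by (intro LIMSEQ_le) auto
  then show ?thesis using \<open>m \<in> M\<close> d_le by (meson order_trans)
qed

lemma nearest_point_orthogonal:
  fixes x :: "'a::complex_hilbert"
  assumes M: "csubspace M" and "m \<in> M" and "n \<in> M"
    and nearest: "\<And>w. w \<in> M \<Longrightarrow> norm (x - m) \<le> norm (x - w)"
  shows "cinner (x - m) n = 0"
proof (rule ccontr)
  define a where "a = cinner (x - m) n"
  define t where "t = 1 / ((norm n)\<^sup>2 + 1)"
  assume "cinner (x - m) n \<noteq> 0"
  then have "0 < (cmod a)\<^sup>2" by (simp add: a_def)
  have "0 < (norm n)\<^sup>2 + 1" by (intro add_nonneg_pos) auto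
  then have "0 < t" "t * (norm n)\<^sup>2 < 1" by (simp_all add: t_def field_simps)
  have "m + scaleC (complex_of_real t * a) n \<in> M"
    using M \<open>m \<in> M\<close> \<open>n \<in> M\<close> unfolding csubspace_def by blast
  then have "(norm (x - m))\<^sup>2 \<le> (norm ((x - m) - scaleC (complex_of_real t * a) n))\<^sup>2"
    using nearest by (intro power_mono) (auto simp: diff_diff_eq)
  also have "\<dots> = (norm (x - m))\<^sup>2 - 2 * (t * (cmod a)\<^sup>2) + t\<^sup>2 * (cmod a)\<^sup>2 * (norm n)\<^sup>2"
    unfolding power2_norm_eq_cinner cinner.Re_diff_scaleC_self a_def Re_cnj_of_real_mult
    by (simp add: norm_mult power_mult_distrib)
  finally have "t * (cmod a)\<^sup>2 * 2 \<le> t * (cmod a)\<^sup>2 * (t * (norm n)\<^sup>2)"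
    by (simp add: power2_eq_square algebra_simps)
  then have "2 \<le> t * (norm n)\<^sup>2"
    using \<open>0 < t\<close> \<open>0 < (cmod a)\<^sup>2\<close> by (simp add: mult_le_cancel_left_pos)
  with \<open>t * (norm n)\<^sup>2 < 1\<close> show False by simp
qed

lemma orthogonal_projection_exists:
  fixes x :: "'a::complex_hilbert"
  assumes "closed M" and "csubspace M"
  shows "\<exists>m\<in>M. \<forall>n\<in>M. cinner (x - m) n = 0"
  using nearest_point_exists[OF assms, of x] nearest_point_orthogonal[OF assms(2)] by blast
lemma Riesz_representation:
  fixes g :: "'a::complex_hilbert \<Rightarrow> complex"
  assumes add: "\<And>x y. g (x + y) = g x + g y" and scale: "\<And>c x. g (scaleC c x) = c * g x"
    and bound: "\<And>x. norm (g x) \<le> K * norm x"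
  shows "\<exists>w. \<forall>x. g x = cinner x w"
proof (cases "\<forall>x. g x = 0")
  case True
  then show ?thesis by (intro exI[of _ 0]) simp
next
  case False
  then obtain x0 where "g x0 \<noteq> 0" by blast
  have diff: "g (a - b) = g a - g b" for a b
    using add[of "a - b" b] by (simp add: algebra_simps)
  have "closed {x. g x = 0}" by (rule closed_kernel_additive_bounded[OF add bound])
  moreover have "csubspace {x. g x = 0}" by (rule csubspace_kernel) (simp_all add: add scale)
  ultimately obtain m where "g m = 0" and orth: "\<And>n. g n = 0 \<Longrightarrow> cinner (x0 - m) n = 0"
    using orthogonal_projection_exists[of _ x0] by blast
  define e where "e = x0 - m"
  have "g e \<noteq> 0" using \<open>g x0 \<noteq> 0\<close> \<open>g m = 0\<close> by (simp add: e_def diff)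
  then have "e \<noteq> 0" using add[of 0 0] by auto
  then have "cinner e e \<noteq> 0" using cinner_self_eq_0 by blast
  have "cnj (cinner e e) = cinner e e" using cinner_commute[of e e] by simp
  have "g x = cinner x (scaleC (cnj (g e) / cinner e e) e)" for x
  proof -
    have "g (x - scaleC (g x / g e) e) = 0" using \<open>g e \<noteq> 0\<close> by (simp add: diff scale)
    then have "cinner (x - scaleC (g x / g e) e) e = 0"
      using orth cinner_commute[of e "x - scaleC (g x / g e) e"] by (simp add: e_def)
    then have "cinner x e = g x / g e * cinner e e"
      by (simp add: cinner.diff_left cinner_scaleC_left)
    then show ?thesis
      using \<open>g e \<noteq> 0\<close> \<open>cinner e e \<noteq> 0\<close> \<open>cnj (cinner e e) = cinner e e\<close>
      by (simp add: cinner.scaleC_right)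
  qed
  then show ?thesis by blast
qed

lemma cinner_adj:
  fixes S :: "'a::complex_hilbert \<Rightarrow> 'a"
  assumes "bounded_op S"
  shows "cinner (S x) y = cinner x (adj S y)"
proof -
  obtain K where K: "\<forall>x. norm (S x) \<le> K * norm x"
    using assms unfolding bounded_op_def by blast
  have "\<exists>w. \<forall>x. cinner (S x) y = cinner x w" for y
  proof (rule Riesz_representation)
    fix x
    have "norm (cinner (S x) y) \<le> norm (S x) * norm y"
      using cinner.Cauchy_Schwarz by (simp add: cinner_snorm_eq_norm)
    also have "\<dots> \<le> K * norm x * norm y" using K by (simp add: mult_right_mono)
    finally show "norm (cinner (S x) y) \<le> (K * norm y) * norm x" by (simp add: mult_ac)
  qed (simp_all add: assms bounded_op_add bounded_op_scaleC cinner_add_left cinner_scaleC_left)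
  then obtain T where T: "\<forall>x y. cinner (S x) y = cinner x (T y)"
    by metis
  have uniq: "T' = T" if "\<forall>x y. cinner (S x) y = cinner x (T' y)" for T'
  proof
    fix y
    have "cinner (T' y - T y) (T' y - T y) = 0"
      using that T by (simp add: cinner.diff_right)
    then show "T' y = T y" using cinner_self_eq_0[of "T' y - T y"] by simp
  qed
  then have "adj S = T"
    unfolding adj_def using T uniq by (intro the_equality) auto
  then show ?thesis using T by simp
qed

section \<open>The A-semi-inner product and the A-adjoint\<close>

lemma semi_inner_innerA:
  assumes "positive_op A"
  shows "semi_inner (innerA A)"
proof
  have A: "bounded_op A" and real: "\<And>x. Im (cinner (A x) x) = 0"
    using assms unfolding positive_op_def by auto
  show "innerA A (x + y) z = innerA A x z + innerA A y z" for x y z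
    by (simp add: innerA_def bounded_op_add[OF A] cinner_add_left)
  show "innerA A (scaleC c x) y = c * innerA A x y" for c x y
    by (simp add: innerA_def bounded_op_scaleC[OF A] cinner_scaleC_left)
  show "0 \<le> Re (innerA A x x)" for x
    using assms unfolding positive_op_def innerA_def by blast
  show "innerA A y x = cnj (innerA A x y)" for x y
  proof -
    define a b where "a = cinner (A x) y" and "b = cinner (A y) x"
    \<comment> \<open>Polarization: the quadratic form is real at x + y and at x + i y.\<close>
    have "cinner (A (x + y)) (x + y) = cinner (A x) x + a + b + cinner (A y) y"
      by (simp add: a_def b_def bounded_op_add[OF A] cinner_add_left cinner.add_right)
    then have "Im (a + b) = 0" using real[of "x + y"] real[of x] real[of y] by simp
    have "cinner (A (x + scaleC \<i> y)) (x + scaleC \<i> y) = cinner (A x) x - \<i> * a + \<i> * b + cinner (A y) y"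
      by (simp add: a_def b_def bounded_op_add[OF A] bounded_op_scaleC[OF A] cinner_add_left
          cinner.add_right cinner_scaleC_left cinner.scaleC_right algebra_simps)
    then have "Re (b - a) = 0" using real[of "x + scaleC \<i> y"] real[of x] real[of y] by simp
    with \<open>Im (a + b) = 0\<close> show ?thesis
      by (simp add: innerA_def a_def[symmetric] b_def[symmetric] complex_eq_iff)
  qed
qed

lemma normA_eq_snorm:
  assumes "positive_op A"
  shows "normA A z = semi_inner.snorm (innerA A) z"
  using semi_inner.snorm_def[OF semi_inner_innerA[OF assms]] by (simp add: normA_def innerA_def)

lemma normA_le_norm:
  assumes "bounded_op A"
  shows "\<exists>K\<ge>0. \<forall>x. normA A x \<le> K * norm x"
proof -
  obtain M where "0 < M" and M: "\<And>x. norm (A x) \<le> M * norm x"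
    using bounded_op_pos_bound[OF assms] by blast
  have "normA A x \<le> sqrt M * norm x" for x
  proof -
    have "Re (cinner (A x) x) \<le> norm (A x) * norm x"
      using cinner.Re_le_snorm_mult by (simp add: cinner_snorm_eq_norm)
    also have "\<dots> \<le> M * norm x * norm x"
      using M[of x] by (simp add: mult_right_mono)
    also have "\<dots> = (sqrt M * norm x)\<^sup>2"
      using \<open>0 < M\<close> by (simp add: power_mult_distrib power2_eq_square)
    finally have "sqrt (Re (cinner (A x) x)) \<le> sqrt ((sqrt M * norm x)\<^sup>2)"
      by (rule real_sqrt_le_mono)
    then show ?thesis unfolding normA_def using \<open>0 < M\<close> by simp
  qed
  then show ?thesis using \<open>0 < M\<close> by (intro exI[of _ "sqrt M"]) auto
qed

lemma A_mp_inverse_A: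
  assumes A: "bounded_op A"
  shows "A (mp_inverse A (A v)) = A v"
proof -
  obtain K where K: "\<And>x. norm (A x) \<le> K * norm x"
    using A unfolding bounded_op_def by blast
  have "closed {x. A x = 0}"
    by (rule closed_kernel_additive_bounded[OF bounded_op_add[OF A] K])
  moreover have "csubspace {x. A x = 0}"
    by (rule csubspace_kernel) (simp_all add: A bounded_op_add bounded_op_scaleC)
  ultimately obtain m where "A m = 0" and orth: "\<And>n. A n = 0 \<Longrightarrow> cinner (v - m) n = 0"
    using orthogonal_projection_exists[of _ v] by blast
  \<comment> \<open>The projection v - m of v onto the orthogonal complement of ker A is the value sought.\<close>
  define P where "P = (\<lambda>x. (\<forall>n. A n = 0 \<longrightarrow> cinner x n = 0) \<and> (\<forall>z. cinner (A x - A v) (A z) = 0))"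
  have "A (v - m) = A v" using \<open>A m = 0\<close> by (simp add: bounded_op_diff[OF A])
  then have "P (v - m)" using orth by (simp add: P_def)
  have "x = v - m" if "P x" for x
  proof -
    have "A (x - (v - m)) = A x - A v"
      using \<open>A (v - m) = A v\<close> by (simp add: bounded_op_diff[OF A])
    moreover have "cinner (A x - A v) (A (x - (v - m))) = 0" using that unfolding P_def by blast
    ultimately have "cinner (A (x - (v - m))) (A (x - (v - m))) = 0" by simp
    then have "A (x - (v - m)) = 0" by (simp only: cinner_self_eq_0)
    then have "cinner x (x - (v - m)) = 0" "cinner (v - m) (x - (v - m)) = 0"
      using that \<open>P (v - m)\<close> unfolding P_def by blast+
    then have "cinner (x - (v - m)) (x - (v - m)) = 0" by (simp add: cinner.diff_left)
    then have "x - (v - m) = 0" by (simp only: cinner_self_eq_0)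
    then show ?thesis by simp
  qed
  then have "(THE x. P x) = v - m" using \<open>P (v - m)\<close> by (intro the_equality)
  then show ?thesis using \<open>A (v - m) = A v\<close> by (simp add: mp_inverse_def P_def)
qed

lemma innerA_BA_witness:
  assumes "bounded_op S" and R: "\<And>x. A (R x) = adj S (A x)"
  shows "innerA A (R u) v = innerA A u (S v)"
  using cinner_adj[OF assms(1), of v "A u"] cinner_commute[of "adj S (A u)" v]
    cinner_commute[of "A u" "S v"]
  by (simp add: innerA_def R)

lemma innerA_sharpA:
  assumes A: "positive_op A" and S: "S \<in> BA A"
  shows "innerA A (S u) v = innerA A u (sharpA A S v)"
proof -
  interpret A: semi_inner "innerA A" using A by (rule semi_inner_innerA)
  have "bounded_op A" using A by (simp add: positive_op_def)
  obtain R where "bounded_op S" and R: "\<And>x. A (R x) = adj S (A x)"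
    using S unfolding BA_def by blast
  have "A (sharpA A S v) = adj S (A v)"
    using A_mp_inverse_A[OF \<open>bounded_op A\<close>, of "R v"] by (simp add: sharpA_def R)
  have A_selfadjoint: "cinner (A x) y = cinner x (A y)" for x y
    using A.commute[of y x] cinner_commute[of x "A y"] by (simp add: innerA_def)
  have "innerA A (S u) v = cinner u (adj S (A v))"
    by (simp add: innerA_def A_selfadjoint cinner_adj[OF \<open>bounded_op S\<close>])
  also have "\<dots> = innerA A u (sharpA A S v)"
    by (simp add: innerA_def A_selfadjoint \<open>A (sharpA A S v) = adj S (A v)\<close>)
  finally show ?thesis .
qed

section \<open>Operators in B_A(H) are bounded for the A-seminorm\<close>

lemma squaring_chain_power_le:
  fixes a :: "nat \<Rightarrow> real"
  assumes "0 < s" and a_nonneg: "\<And>k. 0 \<le> a k" and square: "\<And>k. (a k)\<^sup>2 \<le> a (Suc k) * s"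
  shows "a 0 ^ (2 ^ k) * s \<le> a k * s ^ (2 ^ k)"
proof (induction k)
  case 0
  then show ?case by simp
next
  case (Suc k)
  have "(a 0 ^ (2 ^ k) * s)\<^sup>2 \<le> (a k * s ^ (2 ^ k))\<^sup>2"
    using Suc a_nonneg \<open>0 < s\<close> by (intro power_mono) auto
  then have "a 0 ^ (2 ^ Suc k) * s\<^sup>2 \<le> (a k)\<^sup>2 * s ^ (2 ^ Suc k)"
    by (simp add: power_mult_distrib power_mult[symmetric] mult.commute)
  also have "\<dots> \<le> a (Suc k) * s * s ^ (2 ^ Suc k)"
    using square[of k] \<open>0 < s\<close> by (intro mult_right_mono) auto
  finally have "s * (a 0 ^ (2 ^ Suc k) * s) \<le> s * (a (Suc k) * s ^ (2 ^ Suc k))"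
    by (simp add: power2_eq_square mult_ac)
  then show ?case using \<open>0 < s\<close> by (simp add: mult_le_cancel_left_pos)
qed

lemma squaring_chain_bound:
  fixes a :: "nat \<Rightarrow> real"
  assumes "0 < s" and "0 < M" and "\<And>k. 0 \<le> a k"
    and "\<And>k. (a k)\<^sup>2 \<le> a (Suc k) * s" and growth: "\<And>k. a k \<le> C * M ^ (2 ^ k)"
  shows "a 0 \<le> M * s"
proof (rule ccontr)
  assume "\<not> a 0 \<le> M * s"
  define q where "q = a 0 / (M * s)"
  have "0 < M * s" using assms by simp
  then have "1 < q" using \<open>\<not> a 0 \<le> M * s\<close> by (simp add: q_def)
  have q_bound: "q ^ (2 ^ k) * s \<le> C" for k
  proof -
    have "q ^ (2 ^ k) * s * (M * s) ^ (2 ^ k) = a 0 ^ (2 ^ k) * s"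
      using \<open>0 < M\<close> \<open>0 < s\<close> by (simp add: q_def power_divide)
    also have "\<dots> \<le> a k * s ^ (2 ^ k)" using assms by (intro squaring_chain_power_le)
    also have "\<dots> \<le> C * (M * s) ^ (2 ^ k)"
      using growth[of k] \<open>0 < s\<close> by (simp add: power_mult_distrib mult_right_mono mult.assoc)
    finally show ?thesis using \<open>0 < M * s\<close> by simp
  qed
  obtain k where "C / s < q ^ k" using real_arch_pow[OF \<open>1 < q\<close>] by blast
  also have "q ^ k \<le> q ^ (2 ^ k)"
    using \<open>1 < q\<close> by (intro power_increasing) (auto intro: less_imp_le less_exp)
  finally have "C < q ^ (2 ^ k) * s" using \<open>0 < s\<close> by (simp add: divide_less_eq)
  then show False using q_bound[of k] by simp
qed

lemma norm_funpow_le: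
  fixes T :: "'a::real_normed_vector \<Rightarrow> 'a"
  assumes "\<And>x. norm (T x) \<le> M * norm x" and "0 \<le> M"
  shows "norm ((T ^^ m) x) \<le> M ^ m * norm x"
proof (induction m)
  case 0
  then show ?case by simp
next
  case (Suc m)
  have "norm ((T ^^ Suc m) x) \<le> M * norm ((T ^^ m) x)" using assms(1) by simp
  also have "\<dots> \<le> M * (M ^ m * norm x)" using Suc \<open>0 \<le> M\<close> by (rule mult_left_mono)
  finally show ?case by (simp add: mult_ac)
qed

context semi_inner
begin

lemma funpow_selfadjoint:
  assumes "\<And>u v. p (T u) v = p u (T v)"
  shows "p ((T ^^ m) u) v = p u ((T ^^ m) v)"
proof (induction m arbitrary: u v)
  case 0
  then show ?case by simp
next
  case (Suc m)
  then show ?case by (simp add: assms funpow_swap1)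
qed

text \<open>The seminorm of a selfadjoint T is controlled by its operator norm: with z fixed,
  a k = snorm (T^(2^k) z) satisfies (a k)^2 <= a (k+1) snorm z, while the norm bound
  only lets a k grow like M^(2^k).\<close>
lemma selfadjoint_snorm_le:
  assumes dom: "\<And>x. snorm x \<le> K * norm x" and "0 \<le> K"
    and T: "\<And>x. norm (T x) \<le> M * norm x" and "0 < M"
    and sym: "\<And>u v. p (T u) v = p u (T v)"
  shows "snorm (T z) \<le> M * snorm z"
proof -
  have square: "(snorm ((T ^^ m) w))\<^sup>2 \<le> snorm ((T ^^ (m + m)) w) * snorm w" for m w
  proof -
    have "(snorm ((T ^^ m) w))\<^sup>2 = Re (p ((T ^^ m) ((T ^^ m) w)) w)"
      by (simp add: snorm_power2 funpow_selfadjoint[OF sym])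
    also have "\<dots> \<le> snorm ((T ^^ (m + m)) w) * snorm w"
      using Re_le_snorm_mult by (simp add: funpow_add)
    finally show ?thesis .
  qed
  show ?thesis
  proof (cases "snorm z = 0")
    case True
    then have "(snorm (T z))\<^sup>2 \<le> 0" using square[of 1 z] by simp
    then show ?thesis using True by simp
  next
    case False
    then have "0 < snorm z" using snorm_nonneg[of z] by simp
    have "snorm ((T ^^ (2 ^ 0)) z) \<le> M * snorm z"
    proof (rule squaring_chain_bound[where a = "\<lambda>k. snorm ((T ^^ (2 ^ k)) z)"])
      show "(snorm ((T ^^ (2 ^ k)) z))\<^sup>2 \<le> snorm ((T ^^ (2 ^ Suc k)) z) * snorm z" for k
        using square[of "2 ^ k" z] by (simp add: mult_2)
      show "snorm ((T ^^ (2 ^ k)) z) \<le> (K * norm z) * M ^ (2 ^ k)" for k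
      proof -
        have "snorm ((T ^^ (2 ^ k)) z) \<le> K * norm ((T ^^ (2 ^ k)) z)" by (rule dom)
        also have "\<dots> \<le> K * (M ^ (2 ^ k) * norm z)"
          using \<open>0 \<le> K\<close> \<open>0 < M\<close> by (intro mult_left_mono norm_funpow_le[OF T]) auto
        finally show ?thesis by (simp add: mult_ac)
      qed
    qed (use \<open>0 < snorm z\<close> \<open>0 < M\<close> snorm_nonneg in auto)
    then show ?thesis by simp
  qed
qed

lemma adjoint_snorm_le:
  assumes adj: "\<And>u v. p (S u) v = p u (J v)"
    and S: "\<And>z. snorm (S z) \<le> c * snorm z" and "0 \<le> c"
  shows "snorm (J z) \<le> c * snorm z"
proof -
  have "(snorm (J z))\<^sup>2 = Re (p (S (J z)) z)"
    by (simp add: snorm_power2 adj commute[of z "J z"])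
  also have "\<dots> \<le> snorm (S (J z)) * snorm z" by (rule Re_le_snorm_mult)
  also have "\<dots> \<le> snorm (J z) * (c * snorm z)"
    using mult_right_mono[OF S[of "J z"] snorm_nonneg[of z]] by (simp add: mult_ac)
  finally have "snorm (J z) * snorm (J z) \<le> snorm (J z) * (c * snorm z)"
    by (simp add: power2_eq_square)
  then show ?thesis
    using snorm_nonneg[of "J z"] snorm_nonneg[of z] \<open>0 \<le> c\<close>
    by (cases "snorm (J z) = 0") (simp_all add: mult_le_cancel_left_pos)
qed

lemma snorm_le_sqrt_of_gram:
  assumes gram: "\<And>u v. p (T u) v = p (S u) (S v)"
    and T: "\<And>z. snorm (T z) \<le> M * snorm z" and "0 \<le> M"
  shows "snorm (S z) \<le> sqrt M * snorm z"
proof (rule power2_le_imp_le)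
  have "(snorm (S z))\<^sup>2 \<le> snorm (T z) * snorm z"
    using Re_le_snorm_mult[of "T z" z] by (simp add: snorm_power2 gram)
  also have "\<dots> \<le> M * snorm z * snorm z"
    using T snorm_nonneg by (rule mult_right_mono)
  also have "\<dots> = (sqrt M * snorm z)\<^sup>2"
    using \<open>0 \<le> M\<close> by (simp add: power_mult_distrib power2_eq_square)
  finally show "(snorm (S z))\<^sup>2 \<le> (sqrt M * snorm z)\<^sup>2" .
  show "0 \<le> sqrt M * snorm z" using \<open>0 \<le> M\<close> snorm_nonneg by simp
qed

definition snorm_bounded :: "('a \<Rightarrow> 'a) \<Rightarrow> bool" where
  "snorm_bounded T \<longleftrightarrow> (\<exists>c. \<forall>z. snorm (T z) \<le> c * snorm z)"

lemma snorm_boundedE: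
  assumes "snorm_bounded T"
  obtains c where "0 \<le> c" and "\<And>z. snorm (T z) \<le> c * snorm z"
proof -
  obtain c where c: "\<And>z. snorm (T z) \<le> c * snorm z"
    using assms unfolding snorm_bounded_def by blast
  have "snorm (T z) \<le> max c 0 * snorm z" for z
    using c[of z] mult_right_mono[of c "max c 0" "snorm z"] snorm_nonneg[of z] by simp
  then show thesis by (intro that[of "max c 0"]) auto
qed

lemma snorm_bounded_comp: "snorm_bounded S \<Longrightarrow> snorm_bounded T \<Longrightarrow> snorm_bounded (\<lambda>x. S (T x))"
proof -
  assume "snorm_bounded S" "snorm_bounded T"
  then obtain c d where "0 \<le> c" "\<And>z. snorm (S z) \<le> c * snorm z" "\<And>z. snorm (T z) \<le> d * snorm z"
    by (meson snorm_boundedE)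
  then have "snorm (S (T z)) \<le> (c * d) * snorm z" for z
    by (metis mult.assoc mult_left_mono order_trans)
  then show ?thesis unfolding snorm_bounded_def by blast
qed

lemma snorm_bounded_add: "snorm_bounded S \<Longrightarrow> snorm_bounded T \<Longrightarrow> snorm_bounded (\<lambda>x. S x + T x)"
proof -
  assume "snorm_bounded S" "snorm_bounded T"
  then obtain c d where "\<And>z. snorm (S z) \<le> c * snorm z" "\<And>z. snorm (T z) \<le> d * snorm z"
    unfolding snorm_bounded_def by blast
  have "snorm (S z + T z) \<le> (c + d) * snorm z" for z
  proof -
    have "snorm (S z + T z) \<le> snorm (S z) + snorm (T z)" by (rule snorm_triangle)
    also have "\<dots> \<le> c * snorm z + d * snorm z" by (intro add_mono) fact+
    finally show ?thesis by (simp add: distrib_right)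
  qed
  then show ?thesis unfolding snorm_bounded_def by blast
qed

lemma snorm_bounded_scaleC: "snorm_bounded T \<Longrightarrow> snorm_bounded (\<lambda>x. scaleC a (T x))"
  unfolding snorm_bounded_def snorm_scaleC
  by (metis mult.assoc mult_left_mono norm_ge_zero)

lemma snorm_bounded_adjoint:
  assumes "snorm_bounded S" and "\<And>u v. p (S u) v = p u (J v)"
  shows "snorm_bounded J"
proof -
  obtain c where "0 \<le> c" "\<And>z. snorm (S z) \<le> c * snorm z"
    using assms(1) by (meson snorm_boundedE)
  then show ?thesis
    unfolding snorm_bounded_def using adjoint_snorm_le[OF assms(2)] by blast
qed

lemma snorm_bounded_adjoint_combination:
  assumes "snorm_bounded S" and "snorm_bounded J"
  shows "snorm_bounded (\<lambda>x. J (S x) + S (J x) + scaleC 4 (J (S (J (S x)))))"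
proof -
  have JS: "snorm_bounded (\<lambda>x. J (S x))" using snorm_bounded_comp[OF assms(2,1)] .
  have SJ: "snorm_bounded (\<lambda>x. S (J x))" using snorm_bounded_comp[OF assms] .
  have "snorm_bounded (\<lambda>x. J (S (J (S x))))" using snorm_bounded_comp[OF JS JS] by simp
  then show ?thesis
    using snorm_bounded_add[OF snorm_bounded_add[OF JS SJ] snorm_bounded_scaleC] by simp
qed

end

lemma BA_snorm_bounded:
  assumes A: "positive_op A" and S: "S \<in> BA A"
  shows "semi_inner.snorm_bounded (innerA A) S"
proof -
  interpret A: semi_inner "innerA A" using A by (rule semi_inner_innerA)
  obtain R where "bounded_op S" "bounded_op R" and R: "\<And>x. A (R x) = adj S (A x)"
    using S unfolding BA_def by blast
  have gram: "innerA A (R (S u)) v = innerA A (S u) (S v)" for u v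
    using \<open>bounded_op S\<close> R by (rule innerA_BA_witness)
  obtain MS MR where "0 < MS" and MS: "\<And>x. norm (S x) \<le> MS * norm x"
    and "0 < MR" and MR: "\<And>x. norm (R x) \<le> MR * norm x"
    using bounded_op_pos_bound[OF \<open>bounded_op S\<close>] bounded_op_pos_bound[OF \<open>bounded_op R\<close>] by blast
  have RS_norm: "norm (R (S x)) \<le> (MR * MS) * norm x" for x
    using order_trans[OF MR[of "S x"] mult_left_mono[OF MS[of x]]] \<open>0 < MR\<close> by (simp add: mult_ac)
  have "bounded_op A" using A by (simp add: positive_op_def)
  then obtain K where K: "\<And>x. A.snorm x \<le> K * norm x" "0 \<le> K"
    using normA_le_norm by (metis normA_eq_snorm[OF A])
  have RS_selfadjoint: "innerA A (R (S u)) v = innerA A u (R (S v))" for u v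
    using A.commute[of "S v" "S u"] A.commute[of "R (S v)" u] by (simp add: gram)
  have "A.snorm (R (S z)) \<le> (MR * MS) * A.snorm z" for z
    using A.selfadjoint_snorm_le[OF K RS_norm _ RS_selfadjoint] \<open>0 < MR\<close> \<open>0 < MS\<close> by simp
  then have "A.snorm (S z) \<le> sqrt (MR * MS) * A.snorm z" for z
    using A.snorm_le_sqrt_of_gram[OF gram] \<open>0 < MR\<close> \<open>0 < MS\<close> by simp
  then show ?thesis unfolding A.snorm_bounded_def by blast
qed

section \<open>Suprema over the A-unit sphere\<close>

lemma Sup_insert_0_bounds:
  fixes f :: "'a \<Rightarrow> real"
  assumes "\<And>z. P z \<Longrightarrow> f z \<le> c"
  shows "0 \<le> Sup (insert 0 {f z | z. P z})"
    and "P z \<Longrightarrow> f z \<le> Sup (insert 0 {f z | z. P z})"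
proof -
  have "bdd_above (insert 0 {f z | z. P z})"
    using assms by (intro bdd_aboveI[of _ "max c 0"]) force
  then show "0 \<le> Sup (insert 0 {f z | z. P z})" "P z \<Longrightarrow> f z \<le> Sup (insert 0 {f z | z. P z})"
    by (auto intro: cSup_upper)
qed

lemma opnormA_bounds:
  assumes "positive_op A" and "semi_inner.snorm_bounded (innerA A) T"
  shows "0 \<le> opnormA A T" and "normA A z = 1 \<Longrightarrow> normA A (T z) \<le> opnormA A T"
proof -
  interpret A: semi_inner "innerA A" using assms(1) by (rule semi_inner_innerA)
  obtain c where "\<And>z. A.snorm (T z) \<le> c * A.snorm z"
    using assms(2) unfolding A.snorm_bounded_def by blast
  then have "normA A (T z) \<le> c" if "normA A z = 1" for z
    using that by (metis normA_eq_snorm[OF assms(1)] mult.right_neutral)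
  then show "0 \<le> opnormA A T" "normA A z = 1 \<Longrightarrow> normA A (T z) \<le> opnormA A T"
    using Sup_insert_0_bounds[of "\<lambda>z. normA A z = 1" "\<lambda>z. normA A (T z)" c]
    by (simp_all add: opnormA_def)
qed

lemma numradA_bounds:
  assumes "positive_op A" and "semi_inner.snorm_bounded (innerA A) T"
  shows "0 \<le> numradA A T" and "normA A z = 1 \<Longrightarrow> cmod (innerA A (T z) z) \<le> numradA A T"
proof -
  interpret A: semi_inner "innerA A" using assms(1) by (rule semi_inner_innerA)
  obtain c where "\<And>z. A.snorm (T z) \<le> c * A.snorm z"
    using assms(2) unfolding A.snorm_bounded_def by blast
  then have "cmod (innerA A (T z) z) \<le> c" if "normA A z = 1" for z
    using that A.Cauchy_Schwarz[of "T z" z]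
    by (metis normA_eq_snorm[OF assms(1)] mult.right_neutral order.trans)
  then show "0 \<le> numradA A T" "normA A z = 1 \<Longrightarrow> cmod (innerA A (T z) z) \<le> numradA A T"
    using Sup_insert_0_bounds[of "\<lambda>z. normA A z = 1" "\<lambda>z. cmod (innerA A (T z) z)" c]
    by (simp_all add: numradA_def)
qed

lemma dnumradA_power2_le:
  assumes "0 \<le> B"
    and "\<And>z. normA A z = 1 \<Longrightarrow> (cmod (innerA A (T z) z))\<^sup>2 + (normA A (T z))^4 \<le> B"
  shows "(dnumradA A T)\<^sup>2 \<le> B"
proof -
  define D where "D = insert 0 {sqrt ((cmod (innerA A (T z) z))\<^sup>2 + (normA A (T z))^4) | z. normA A z = 1}"
  have "sqrt ((cmod (innerA A (T z) z))\<^sup>2 + (normA A (T z))^4) \<le> sqrt B" if "normA A z = 1" for z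
    using assms(2)[OF that] by simp
  then have "0 \<le> Sup D" and "Sup D \<le> sqrt B"
    using Sup_insert_0_bounds(1)[of "\<lambda>z. normA A z = 1"
        "\<lambda>z. sqrt ((cmod (innerA A (T z) z))\<^sup>2 + (normA A (T z))^4)" "sqrt B"]
    unfolding D_def using assms(1) by (auto intro: cSup_least)
  then have "(Sup D)\<^sup>2 \<le> (sqrt B)\<^sup>2" by (simp add: power_mono)
  then show ?thesis using assms(1) by (simp add: dnumradA_def D_def)
qed

theorem corollary2p22:
  fixes A S :: "'a::complex_hilbert \<Rightarrow> 'a"
  assumes "positive_op A"
    and "S \<in> BA A"
  shows "(dnumradA A S)\<^sup>2 \<le>
    1/4 * opnormA A (\<lambda>x. sharpA A S (S x) + S (sharpA A S x)
                          + scaleC 4 (sharpA A S (S (sharpA A S (S x)))))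
    + 1/2 * numradA A (\<lambda>x. S (S x))"
proof -
  interpret A: semi_inner "innerA A" using assms(1) by (rule semi_inner_innerA)
  define J where "J = sharpA A S"
  define P where "P = (\<lambda>x. J (S x) + S (J x) + scaleC 4 (J (S (J (S x)))))"
  have adj: "innerA A (S u) v = innerA A u (J v)" for u v
    unfolding J_def using assms by (rule innerA_sharpA)
  have S: "A.snorm_bounded S" using assms by (rule BA_snorm_bounded)
  then have "A.snorm_bounded J" using adj by (rule A.snorm_bounded_adjoint)
  with S have P: "A.snorm_bounded P" unfolding P_def by (rule A.snorm_bounded_adjoint_combination)
  have SS: "A.snorm_bounded (\<lambda>x. S (S x))" using A.snorm_bounded_comp[OF S S] .
  have "(dnumradA A S)\<^sup>2 \<le> 1/4 * opnormA A P + 1/2 * numradA A (\<lambda>x. S (S x))"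
  proof (rule dnumradA_power2_le, goal_cases)
    case 1
    show ?case using opnormA_bounds(1)[OF assms(1) P] numradA_bounds(1)[OF assms(1) SS] by simp
  next
    case (2 z)
    have "(cmod (innerA A (S z) z))\<^sup>2 + (normA A (S z))^4
        \<le> 1/4 * normA A (P z) + 1/2 * cmod (innerA A (S (S z)) z)"
      using A.dnumrad_pointwise_le[OF adj] 2 by (simp add: P_def normA_eq_snorm[OF assms(1)])
    then show ?case
      using opnormA_bounds(2)[OF assms(1) P 2] numradA_bounds(2)[OF assms(1) SS 2] by simp
  qed
  then show ?thesis by (simp add: P_def J_def)
qed

end
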